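(* Let $n\ge3$, $\mu_1,\mu_2,\beta>0$, $p=2q+1$ with $\frac{n}{n-2}<p<\frac{n+2}{n-2}$, let $(u,v)$ be a nonnegative radial solution of (S) and $\bar w_1,\bar w_2$ as in the context. Then $(\bar w_1,\bar w_2)$ solves $$\bar w_i''+\tau_0\bar w_i'-\sigma_0\bar w_i+\mu_i\bar w_i^{2q+1}+\beta\bar w_i^q\bar w_j^{q+1}=0\ \ (\{i,j\}=\{1,2\})\ \text{on }\mathbb{R},$$ the function $\bar\Psi(t)$ is nondecreasing and uniformly bounded on $\mathbb{R}$, and $$\frac{d}{dt}\bar\Psi(t)=-\tau_0\big[(\bar w_1')^2+(\bar w_2')^2\big](t).$$
   Context: System (S): $-\Delta u=\mu_1u^{2q+1}+\beta u^qv^{q+1}$, $-\Delta v=\mu_2v^{2q+1}+\beta v^qu^{q+1}$ in $\mathbb{R}^n\setminus\{0\}$; nonnegative solutions are $C^2(\mathbb{R}^n\setminus\{0\})$ pairs with $u,v\ge0$. $\bar u(x)=|x|^{2-n}u(x/|x|^2)$, $\bar v(x)=|x|^{2-n}v(x/|x|^2)$, $\alpha=p(n-2)-(n+2)$, $\delta_0=\frac{2+\alpha}{p-1}$, $\bar w_1(t)=e^{-\delta_0t}\bar u(e^{-t})$, $\bar w_2(t)=e^{-\delta_0t}\bar v(e^{-t})$, $\tau_0=\frac{n-2}{p-1}\big(\frac{n+2+2\alpha}{n-2}-p\big)<0$, $\sigma_0=\frac{(2+\alpha)(n-2)}{(p-1)^2}\big(p-\frac{n+\alpha}{n-2}\big)>0$,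 and $$\bar\Psi(t)=\tfrac12\big(|\bar w_1'|^2+|\bar w_2'|^2-\sigma_0(\bar w_1^2+\bar w_2^2)\big)+\tfrac1{p+1}\big(\mu_1\bar w_1^{p+1}+2\beta\bar w_1^{q+1}\bar w_2^{q+1}+\mu_2\bar w_2^{p+1}\big).$$ *)

theory Defs
  imports "HOL-Analysis.Analysis"
begin

definition partial :: "'n::finite \<Rightarrow> (real^'n \<Rightarrow> real) \<Rightarrow> real^'n \<Rightarrow> real" where
  "partial i f x = deriv (\<lambda>t. f (x + t *\<^sub>R axis i 1)) 0"

definition has_partial_at :: "'n::finite \<Rightarrow> (real^'n \<Rightarrow> real) \<Rightarrow> real^'n \<Rightarrow> bool" where
  "has_partial_at i f x \<longleftrightarrow> (\<lambda>t. f (x + t *\<^sub>R axis i 1)) differentiable (at 0)"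

definition C2_on :: "(real^'n::finite) set \<Rightarrow> (real^'n \<Rightarrow> real) \<Rightarrow> bool" where
  "C2_on S f \<longleftrightarrow> continuous_on S f \<and>
     (\<forall>i. (\<forall>x\<in>S. has_partial_at i f x) \<and> continuous_on S (partial i f) \<and>
       (\<forall>j. (\<forall>x\<in>S. has_partial_at j (partial i f) x) \<and> continuous_on S (partial j (partial i f))))"

definition laplacian :: "(real^'n::finite \<Rightarrow> real) \<Rightarrow> real^'n \<Rightarrow> real" where
  "laplacian f x = (\<Sum>i\<in>UNIV. partial i (partial i f) x)"

definition solves_S :: "real \<Rightarrow> real \<Rightarrow> real \<Rightarrow> real \<Rightarrow> (real^'n::finite \<Rightarrow> real) \<Rightarrow> (real^'n \<Rightarrow> real) \<Rightarrow> bool" where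
  "solves_S \<mu>1 \<mu>2 \<beta> q u v \<longleftrightarrow>
     C2_on (-{0}) u \<and> C2_on (-{0}) v \<and>
     (\<forall>x. x \<noteq> 0 \<longrightarrow> u x \<ge> 0 \<and> v x \<ge> 0) \<and>
     (\<forall>x. x \<noteq> 0 \<longrightarrow>
        - laplacian u x = \<mu>1 * u x powr (2*q+1) + \<beta> * u x powr q * v x powr (q+1) \<and>
        - laplacian v x = \<mu>2 * v x powr (2*q+1) + \<beta> * v x powr q * u x powr (q+1))"

definition radial :: "(real^'n::finite \<Rightarrow> real) \<Rightarrow> bool" where
  "radial u \<longleftrightarrow> (\<forall>x y. x \<noteq> 0 \<longrightarrow> norm x = norm y \<longrightarrow> u x = u y)"

definition kelvin :: "(real^'n::finite \<Rightarrow> real) \<Rightarrow> real^'n \<Rightarrow> real" where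
  "kelvin u x = norm x powr (2 - real CARD('n)) * u ((1 / (norm x)\<^sup>2) *\<^sub>R x)"

definition alpha0 :: "real \<Rightarrow> real \<Rightarrow> real" where
  "alpha0 n p = p * (n - 2) - (n + 2)"

definition delta0 :: "real \<Rightarrow> real \<Rightarrow> real" where
  "delta0 n p = (2 + alpha0 n p) / (p - 1)"

definition tau0 :: "real \<Rightarrow> real \<Rightarrow> real" where
  "tau0 n p = (n - 2) / (p - 1) * ((n + 2 + 2 * alpha0 n p) / (n - 2) - p)"

definition sigma0 :: "real \<Rightarrow> real \<Rightarrow> real" where
  "sigma0 n p = (2 + alpha0 n p) * (n - 2) / (p - 1)\<^sup>2 * (p - (n + alpha0 n p) / (n - 2))"

text \<open>bar w(t) = e^(-delta0 t) bar u(e^(-t)), evaluated along the ray through the unit vector e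
  (independent of e for radial u).\<close>
definition wbar :: "real^'n::finite \<Rightarrow> real \<Rightarrow> (real^'n \<Rightarrow> real) \<Rightarrow> real \<Rightarrow> real" where
  "wbar e p u t = exp (- delta0 (real CARD('n)) p * t) * kelvin u (exp (- t) *\<^sub>R e)"

definition Psi_bar :: "real \<Rightarrow> real \<Rightarrow> real \<Rightarrow> real \<Rightarrow> real \<Rightarrow> real \<Rightarrow> (real \<Rightarrow> real) \<Rightarrow> (real \<Rightarrow> real) \<Rightarrow> real \<Rightarrow> real" where
  "Psi_bar n p q \<mu>1 \<mu>2 \<beta> w1 w2 t =
     1/2 * ((deriv w1 t)\<^sup>2 + (deriv w2 t)\<^sup>2 - sigma0 n p * ((w1 t)\<^sup>2 + (w2 t)\<^sup>2))
     + 1 / (p + 1) * (\<mu>1 * w1 t powr (p + 1) + 2 * \<beta> * w1 t powr (q + 1) * w2 t powr (q + 1)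
                     + \<mu>2 * w2 t powr (p + 1))"

end

theory Submission
  imports Defs
begin

(*
  For a radial solution the Laplacian acts on the profile phi(r) = u(r e_k) as
  phi'' + (n - 1)/r phi', and the Kelvin transform composed with r = e^-t turns the
  solution into w(t) = e^(m t) phi(e^t) with m = 2/(p - 1) (an Emden-Fowler
  transform).  Since m p = m + 2, the system (S) becomes the autonomous damped system
  w'' + tau0 w' - sigma0 w + f(w) = 0, and multiplying by w' shows that the energy
  Psi has derivative -tau0 |w'|^2 >= 0.

  For boundedness, the flux r^(n-1) phi' of a nonnegative radial supersolution of
  -Delta phi >= mu phi^p is nonincreasing, which yields the universal decay
  r^(2/(p-1)) phi(r) <= C, i.e. w is bounded.  A bounded solution of w'' - k w' = O(1)
  with k = -tau0 > 0 has bounded w', so every term of Psi is bounded.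
*)

section \<open>Radial functions\<close>

definition radial_profile :: "'n::finite \<Rightarrow> (real^'n \<Rightarrow> real) \<Rightarrow> real \<Rightarrow> real" where
  "radial_profile k u r = u (r *\<^sub>R axis k 1)"

lemma has_real_derivative_norm_add_axis:
  fixes y :: "real^'n"
  assumes "y \<noteq> 0"
  shows "((\<lambda>t. norm (y + t *\<^sub>R axis i 1)) has_real_derivative y $ i / norm y) (at 0)"
proof -
  have "((\<lambda>t. y + t *\<^sub>R axis i 1) has_derivative (\<lambda>h. h *\<^sub>R axis i 1)) (at 0)"
    by (auto intro!: derivative_eq_intros)
  moreover have "(norm has_derivative (\<lambda>h. h \<bullet> sgn y)) (at (y + 0 *\<^sub>R axis i 1))"
    using has_derivative_norm[OF assms] by simp
  ultimately have "((\<lambda>t. norm (y + t *\<^sub>R axis i 1)) has_derivative (\<lambda>h. (h *\<^sub>R axis i 1) \<bullet> sgn y)) (at 0)"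
    by (rule has_derivative_compose)
  then show ?thesis
    unfolding has_field_derivative_def
    by (rule has_derivative_eq_rhs) (simp add: fun_eq_iff sgn_div_norm inner_axis' field_simps)
qed

lemma add_axis_nonzero:
  fixes y :: "real^'n"
  assumes "\<bar>t\<bar> < norm y"
  shows "y + t *\<^sub>R axis i 1 \<noteq> 0"
proof
  assume "y + t *\<^sub>R axis i 1 = 0"
  then have "y = - (t *\<^sub>R axis i 1)" by (simp add: eq_neg_iff_add_eq_0)
  then have "norm y = \<bar>t\<bar>" by simp
  with assms show False by simp
qed

lemma has_partial_at_imp_has_real_derivative:
  assumes "has_partial_at i f x"
  shows "((\<lambda>t. f (x + t *\<^sub>R axis i 1)) has_real_derivative partial i f x) (at 0)"
  using assms unfolding has_partial_at_def partial_def
  by (simp add: DERIV_deriv_iff_real_differentiable)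

lemma radial_profile_has_real_derivative:
  assumes "has_partial_at k f (r *\<^sub>R axis k 1)"
  shows "(radial_profile k f has_real_derivative radial_profile k (partial k f) r) (at r)"
proof -
  have "((\<lambda>t. radial_profile k f (t + r)) has_real_derivative partial k f (r *\<^sub>R axis k 1)) (at 0)"
    using has_partial_at_imp_has_real_derivative[OF assms]
    by (simp add: radial_profile_def scaleR_add_left add.commute)
  then show ?thesis
    using DERIV_shift[of "radial_profile k f" _ 0 r] by (simp add: radial_profile_def)
qed

lemma radial_eq_profile:
  assumes "radial u" "y \<noteq> 0"
  shows "u y = radial_profile k u (norm y)"
proof -
  have "norm (norm y *\<^sub>R axis k (1::real)) = norm y" by simp
  then show ?thesis using assms unfolding radial_def radial_profile_def by metis
qed

lemma radial_has_derivative_along_axis: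
  fixes u :: "real^'n::finite \<Rightarrow> real"
  assumes u: "radial u" "\<forall>x\<in>-{0}. has_partial_at k u x" and y: "y \<noteq> 0"
  shows "((\<lambda>t. u (y + t *\<^sub>R axis i 1)) has_real_derivative
            radial_profile k (partial k u) (norm y) * (y $ i / norm y)) (at 0)"
proof -
  have "(radial_profile k u has_real_derivative radial_profile k (partial k u) (norm y)) (at (norm y))"
    using y u(2) by (intro radial_profile_has_real_derivative) simp
  then have "(radial_profile k u has_real_derivative radial_profile k (partial k u) (norm y))
      (at ((\<lambda>t. norm (y + t *\<^sub>R axis i 1)) 0))"
    by simp
  from DERIV_chain2[OF this has_real_derivative_norm_add_axis[OF y]]
  have "((\<lambda>t. radial_profile k u (norm (y + t *\<^sub>R axis i 1))) has_real_derivative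
            radial_profile k (partial k u) (norm y) * (y $ i / norm y)) (at 0)"
    by simp
  then show ?thesis
  proof (rule has_field_derivative_transform_within_open[where S = "ball 0 (norm y)"])
    fix t :: real assume "t \<in> ball 0 (norm y)"
    then show "radial_profile k u (norm (y + t *\<^sub>R axis i 1)) = u (y + t *\<^sub>R axis i 1)"
      by (metis add_axis_nonzero radial_eq_profile[OF u(1)] mem_ball_0 real_norm_def)
  qed (use y in auto)
qed

lemma radial_partial_eq:
  fixes u :: "real^'n::finite \<Rightarrow> real"
  assumes "radial u" "\<forall>x\<in>-{0}. has_partial_at k u x" and "y \<noteq> 0"
  shows "partial i u y = radial_profile k (partial k u) (norm y) * (y $ i / norm y)"
  unfolding partial_def[of i u y] using DERIV_imp_deriv[OF radial_has_derivative_along_axis[OF assms]] .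

lemma radial_partial_has_derivative_along_axis:
  fixes u :: "real^'n::finite \<Rightarrow> real"
  assumes C2: "C2_on (-{0}) u" and rad: "radial u" and x: "x \<noteq> 0"
  shows "((\<lambda>t. partial i u (x + t *\<^sub>R axis i 1)) has_real_derivative
            radial_profile k (partial k (partial k u)) (norm x) * (x $ i / norm x)\<^sup>2
            + radial_profile k (partial k u) (norm x) * (1 / norm x - (x $ i)\<^sup>2 / norm x ^ 3)) (at 0)"
proof -
  have u1: "\<forall>y\<in>-{0}. has_partial_at k u y" and u2: "has_partial_at k (partial k u) (norm x *\<^sub>R axis k 1)"
    using C2 x unfolding C2_on_def by auto
  have "(radial_profile k (partial k u) has_real_derivative radial_profile k (partial k (partial k u)) (norm x))
      (at ((\<lambda>t. norm (x + t *\<^sub>R axis i 1)) 0))"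
    using radial_profile_has_real_derivative[OF u2] by simp
  from DERIV_chain2[OF this has_real_derivative_norm_add_axis[OF x]]
  have d1: "((\<lambda>t. radial_profile k (partial k u) (norm (x + t *\<^sub>R axis i 1))) has_real_derivative
            radial_profile k (partial k (partial k u)) (norm x) * (x $ i / norm x)) (at 0)"
    by simp
  have d2: "((\<lambda>t. (x $ i + t) / norm (x + t *\<^sub>R axis i 1)) has_real_derivative
            1 / norm x - (x $ i)\<^sup>2 / norm x ^ 3) (at 0)"
    using DERIV_divide[OF DERIV_add[OF DERIV_const[of "x $ i"] DERIV_ident] has_real_derivative_norm_add_axis[OF x]] x
    by (simp add: field_simps power2_eq_square power3_eq_cube)
  from DERIV_mult[OF d1 d2]
  have "((\<lambda>t. radial_profile k (partial k u) (norm (x + t *\<^sub>R axis i 1)) * ((x $ i + t) / norm (x + t *\<^sub>R axis i 1)))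
       has_real_derivative
            radial_profile k (partial k (partial k u)) (norm x) * (x $ i / norm x)\<^sup>2
            + radial_profile k (partial k u) (norm x) * (1 / norm x - (x $ i)\<^sup>2 / norm x ^ 3)) (at 0)"
    by (rule DERIV_cong) (simp add: algebra_simps power2_eq_square)
  then show ?thesis
  proof (rule has_field_derivative_transform_within_open[where S = "ball 0 (norm x)"])
    fix t :: real assume "t \<in> ball 0 (norm x)"
    then have "x + t *\<^sub>R axis i 1 \<noteq> 0" by (intro add_axis_nonzero) simp
    then show "radial_profile k (partial k u) (norm (x + t *\<^sub>R axis i 1)) * ((x $ i + t) / norm (x + t *\<^sub>R axis i 1))
        = partial i u (x + t *\<^sub>R axis i 1)"
      using radial_partial_eq[OF rad u1] by (simp add: axis_def)
  qed (use x in auto)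
qed

lemma laplacian_radial:
  fixes u :: "real^'n::finite \<Rightarrow> real"
  assumes "C2_on (-{0}) u" "radial u" "x \<noteq> 0"
  shows "laplacian u x = radial_profile k (partial k (partial k u)) (norm x)
           + (real CARD('n) - 1) / norm x * radial_profile k (partial k u) (norm x)"
proof -
  let ?P2 = "radial_profile k (partial k (partial k u)) (norm x)"
  let ?P1 = "radial_profile k (partial k u) (norm x)"
  have sum_sq: "(\<Sum>i\<in>UNIV. (x $ i)\<^sup>2) = (norm x)\<^sup>2"
    unfolding power2_norm_eq_inner inner_vec_def by (simp add: power2_eq_square)
  have "laplacian u x = (\<Sum>i\<in>UNIV. ?P2 * (x $ i / norm x)\<^sup>2 + ?P1 * (1 / norm x - (x $ i)\<^sup>2 / norm x ^ 3))"
    unfolding laplacian_def partial_def[of _ "partial _ u" x]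
    using DERIV_imp_deriv[OF radial_partial_has_derivative_along_axis[OF assms]] by simp
  also have "\<dots> = ?P2 * (\<Sum>i\<in>UNIV. (x $ i)\<^sup>2) / (norm x)\<^sup>2
      + ?P1 * (real CARD('n) / norm x - (\<Sum>i\<in>UNIV. (x $ i)\<^sup>2) / norm x ^ 3)"
    by (simp add: sum.distrib sum_distrib_left sum_subtractf sum_divide_distrib[symmetric] power_divide algebra_simps)
  also have "\<dots> = ?P2 + (real CARD('n) - 1) / norm x * ?P1"
    unfolding sum_sq using assms(3) by (simp add: field_simps power2_eq_square power3_eq_cube)
  finally show ?thesis .
qed

lemma radial_profile_derivatives:
  fixes u :: "real^'n::finite \<Rightarrow> real"
  assumes "C2_on (-{0}) u" "r \<noteq> 0"
  shows "(radial_profile k u has_real_derivative radial_profile k (partial k u) r) (at r)"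
    and "(radial_profile k (partial k u) has_real_derivative radial_profile k (partial k (partial k u)) r) (at r)"
  using assms unfolding C2_on_def by (auto intro!: radial_profile_has_real_derivative)

lemma laplacian_radial_profile:
  fixes u :: "real^'n::finite \<Rightarrow> real"
  assumes "C2_on (-{0}) u" "radial u" "0 < r"
  shows "laplacian u (r *\<^sub>R axis k 1) = radial_profile k (partial k (partial k u)) r
           + (real CARD('n) - 1) / r * radial_profile k (partial k u) r"
  using laplacian_radial[OF assms(1,2), of "r *\<^sub>R axis k 1" k] assms(3) by simp

lemma radial_profile_equation:
  fixes u v :: "real^'n::finite \<Rightarrow> real"
  assumes C2: "C2_on (-{0}) u" and rad: "radial u"
    and eq: "\<And>x. x \<noteq> 0 \<Longrightarrow> - laplacian u x = \<mu> * u x powr (2*q+1) + \<beta> * u x powr q * v x powr (q+1)"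
    and r: "0 < r"
  shows "radial_profile k (partial k (partial k u)) r + (real CARD('n) - 1) / r * radial_profile k (partial k u) r
       = - (\<mu> * radial_profile k u r powr (2*q+1) + \<beta> * radial_profile k u r powr q * radial_profile k v r powr (q+1))"
  using eq[of "r *\<^sub>R axis k 1"] laplacian_radial_profile[OF C2 rad r, of k] r
  by (simp add: radial_profile_def)

section \<open>The Emden-Fowler transform\<close>

lemma power_mult_has_real_derivative:
  fixes f :: "real \<Rightarrow> real"
  assumes f: "(f has_real_derivative f') (at r)" and r: "0 < r" and n: "1 \<le> n"
  shows "((\<lambda>s. s ^ (n - 1) * f s) has_real_derivative r ^ (n - 1) * (f' + (real n - 1) / r * f r)) (at r)"
proof -
  have coeff: "real (n - 1) * r ^ (n - 1 - Suc 0) = r ^ (n - 1) * ((real n - 1) / r)"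
  proof (cases "n = 1")
    case False
    then have "r ^ (n - 1) = r * r ^ (n - 1 - Suc 0)" using n by (simp add: power_eq_if)
    then show ?thesis using r n by (simp add: field_simps)
  qed simp
  from DERIV_mult[OF DERIV_pow f, of "n - 1"]
  have "((\<lambda>s. s ^ (n - 1) * f s) has_real_derivative real (n - 1) * r ^ (n - 1 - Suc 0) * f r + f' * r ^ (n - 1)) (at r)" .
  then show ?thesis unfolding coeff by (rule DERIV_cong) (simp add: algebra_simps)
qed

lemma emden_fowler_transform:
  fixes \<phi> \<phi>' \<phi>'' :: "real \<Rightarrow> real" and m n :: real
  assumes \<phi>: "\<And>r. 0 < r \<Longrightarrow> (\<phi> has_real_derivative \<phi>' r) (at r)"
    and \<phi>': "\<And>r. 0 < r \<Longrightarrow> (\<phi>' has_real_derivative \<phi>'' r) (at r)"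
  defines "w \<equiv> \<lambda>t. exp (m * t) * \<phi> (exp t)"
    and "w' \<equiv> \<lambda>t. exp (m * t) * (m * \<phi> (exp t) + exp t * \<phi>' (exp t))"
    and "w'' \<equiv> \<lambda>t. exp (m * t) * (m\<^sup>2 * \<phi> (exp t) + (2 * m + 1) * exp t * \<phi>' (exp t) + (exp t)\<^sup>2 * \<phi>'' (exp t))"
  shows "(w has_real_derivative w' t) (at t)"
    and "(w' has_real_derivative w'' t) (at t)"
    and "w'' t + (n - 2 - 2 * m) * w' t - m * (n - 2 - m) * w t
         = exp (m * t) * (exp t)\<^sup>2 * (\<phi>'' (exp t) + (n - 1) / exp t * \<phi>' (exp t))"
proof -
  have c0: "((\<lambda>t. \<phi> (exp t)) has_real_derivative \<phi>' (exp t) * exp t) (at t)"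
    using DERIV_chain2[OF \<phi> DERIV_exp] by simp
  have c1: "((\<lambda>t. \<phi>' (exp t)) has_real_derivative \<phi>'' (exp t) * exp t) (at t)"
    using DERIV_chain2[OF \<phi>' DERIV_exp] by simp
  show "(w has_real_derivative w' t) (at t)"
    unfolding w_def w'_def
    by (rule DERIV_cong, rule derivative_eq_intros c0 | simp)+ (simp add: algebra_simps)
  show "(w' has_real_derivative w'' t) (at t)"
    unfolding w'_def w''_def
    by (rule DERIV_cong, rule derivative_eq_intros c0 c1 | simp)+ (simp add: algebra_simps power2_eq_square)
  show "w'' t + (n - 2 - 2 * m) * w' t - m * (n - 2 - m) * w t
      = exp (m * t) * (exp t)\<^sup>2 * (\<phi>'' (exp t) + (n - 1) / exp t * \<phi>' (exp t))"
    unfolding w_def w'_def w''_def by (simp add: field_simps power2_eq_square)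
qed

text \<open>The hypothesis is \<open>m p = m + 2\<close>, which holds for \<open>m = 2 / (p - 1)\<close>.\<close>
lemma coupling_exp_scaling:
  fixes a b m q \<mu> \<beta> :: real
  assumes "m * (2 * q + 1) = m + 2"
  shows "exp (m * t) * (exp t)\<^sup>2 * (\<mu> * a powr (2*q+1) + \<beta> * a powr q * b powr (q+1))
       = \<mu> * (exp (m * t) * a) powr (2*q+1) + \<beta> * (exp (m * t) * a) powr q * (exp (m * t) * b) powr (q+1)"
proof -
  have scale: "exp (m * t) powr (2*q+1) = exp (m * t) * (exp t)\<^sup>2"
    using assms by (simp add: exp_powr_real power2_eq_square exp_add[symmetric] algebra_simps)
  then have "exp (m * t) powr q * exp (m * t) powr (q+1) = exp (m * t) * (exp t)\<^sup>2"
    by (simp add: powr_add[symmetric] algebra_simps)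
  with scale show ?thesis unfolding powr_mult by (simp add: algebra_simps)
qed

lemma delta0_eq: "1 < p \<Longrightarrow> delta0 n p = n - 2 - 2 / (p - 1)"
  unfolding delta0_def alpha0_def by (simp add: field_simps)

lemma tau0_eq:
  assumes "1 < p" "n \<noteq> 2"
  shows "tau0 n p = n - 2 - 2 * (2 / (p - 1))"
proof -
  have "(n + 2 + 2 * alpha0 n p) / (n - 2) - p = alpha0 n p / (n - 2)"
    using assms unfolding alpha0_def by (simp add: field_simps)
  then have "tau0 n p = alpha0 n p / (p - 1)" unfolding tau0_def using assms by simp
  then show ?thesis using assms unfolding alpha0_def by (simp add: field_simps)
qed

lemma sigma0_eq:
  assumes "1 < p" "n \<noteq> 2"
  shows "sigma0 n p = 2 / (p - 1) * (n - 2 - 2 / (p - 1))"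
proof -
  have s1: "p - (n + alpha0 n p) / (n - 2) = 2 / (n - 2)"
    using assms unfolding alpha0_def by (simp add: field_simps)
  have s2: "2 + alpha0 n p = (n - 2) * (p - 1) - 2" unfolding alpha0_def by (simp add: algebra_simps)
  have "sigma0 n p = 2 * ((n - 2) * (p - 1) - 2) / (p - 1)\<^sup>2"
    unfolding sigma0_def s1 s2 using assms by simp
  also have "\<dots> = 2 / (p - 1) * (n - 2 - 2 / (p - 1))"
    using assms by (simp add: field_simps power2_eq_square)
  finally show ?thesis .
qed

lemma tau0_neg:
  assumes "2 < n" "1 < p" "p < (n + 2) / (n - 2)"
  shows "tau0 n p < 0"
proof -
  have "(n - 2) * (p - 1) < 4" using assms by (simp add: field_simps)
  then have "n - 2 < 2 * (2 / (p - 1))" using assms(2) by (simp add: field_simps)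
  then show ?thesis using assms by (simp add: tau0_eq)
qed

section \<open>The damped system and its energy\<close>

text \<open>Unlike \<open>DERIV_fun_powr\<close>, this allows \<open>g t = 0\<close>, where \<open>g powr (a - 1)\<close> tends to \<open>0\<close>.\<close>
lemma has_real_derivative_powr_nonneg:
  fixes g :: "real \<Rightarrow> real"
  assumes a: "1 < a" and g: "(g has_real_derivative g') (at t)" and nonneg: "\<And>s. 0 \<le> g s"
  shows "((\<lambda>s. g s powr a) has_real_derivative a * g t powr (a - 1) * g') (at t)"
proof (cases "g t = 0")
  case False
  then show ?thesis using DERIV_fun_powr[OF g, of a] nonneg[of t] by simp
next
  case True
  have "g s powr a = g s powr (a - 1) * g s" for s
    using powr_add[of "g s" "a - 1" 1] nonneg[of s] by (cases "g s = 0") simp_all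
  then have quot: "(\<lambda>s. (g s powr a - g t powr a) / (s - t)) = (\<lambda>s. g s powr (a - 1) * ((g s - g t) / (s - t)))"
    using True a by (simp add: fun_eq_iff)
  have "((\<lambda>s. g s powr (a - 1)) \<longlongrightarrow> 0) (at t)"
    using DERIV_isCont[OF g] True a nonneg by (intro tendsto_zero_powrI) (auto simp: isCont_def)
  moreover have "((\<lambda>s. (g s - g t) / (s - t)) \<longlongrightarrow> g') (at t)"
    using g by (simp add: has_field_derivative_iff)
  ultimately have "((\<lambda>s. (g s powr a - g t powr a) / (s - t)) \<longlongrightarrow> 0 * g') (at t)"
    unfolding quot by (rule tendsto_mult)
  then show ?thesis using True by (simp add: has_field_derivative_iff)
qed

lemma coupling_potential_has_real_derivative:
  fixes W V :: "real \<Rightarrow> real"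
  assumes W: "(W has_real_derivative W') (at t)" and V: "(V has_real_derivative V') (at t)"
    and nonneg: "\<And>s. 0 \<le> W s" "\<And>s. 0 \<le> V s" and q: "0 < q" and p: "p = 2 * q + 1"
  shows "((\<lambda>t. 1 / (p + 1) * (\<mu>1 * W t powr (p + 1) + 2 * \<beta> * W t powr (q + 1) * V t powr (q + 1)
                              + \<mu>2 * V t powr (p + 1)))
          has_real_derivative W' * (\<mu>1 * W t powr (2*q+1) + \<beta> * W t powr q * V t powr (q+1))
                            + V' * (\<mu>2 * V t powr (2*q+1) + \<beta> * V t powr q * W t powr (q+1))) (at t)"
proof -
  have a: "1 < p + 1" "1 < q + 1" using q p by auto
  note powr_rules = has_real_derivative_powr_nonneg[OF a(1) W nonneg(1)] has_real_derivative_powr_nonneg[OF a(2) W nonneg(1)]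
    has_real_derivative_powr_nonneg[OF a(1) V nonneg(2)] has_real_derivative_powr_nonneg[OF a(2) V nonneg(2)]
  let ?target = "W' * (\<mu>1 * W t powr (2*q+1) + \<beta> * W t powr q * V t powr (q+1))
                + V' * (\<mu>2 * V t powr (2*q+1) + \<beta> * V t powr q * W t powr (q+1))"
  have "((\<lambda>t. \<mu>1 * W t powr (p + 1) + 2 * \<beta> * W t powr (q + 1) * V t powr (q + 1) + \<mu>2 * V t powr (p + 1))
     has_real_derivative \<mu>1 * ((p + 1) * W t powr (p + 1 - 1) * W')
       + (2 * \<beta> * ((q + 1) * W t powr (q + 1 - 1) * W') * V t powr (q + 1)
          + (q + 1) * V t powr (q + 1 - 1) * V' * (2 * \<beta> * W t powr (q + 1)))
       + \<mu>2 * ((p + 1) * V t powr (p + 1 - 1) * V')) (at t)"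
    by (intro DERIV_add DERIV_cmult DERIV_mult powr_rules)
  moreover have "\<mu>1 * ((p + 1) * W t powr (p + 1 - 1) * W')
       + (2 * \<beta> * ((q + 1) * W t powr (q + 1 - 1) * W') * V t powr (q + 1)
          + (q + 1) * V t powr (q + 1 - 1) * V' * (2 * \<beta> * W t powr (q + 1)))
       + \<mu>2 * ((p + 1) * V t powr (p + 1 - 1) * V') = (p + 1) * ?target"
    unfolding p by (simp add: algebra_simps)
  ultimately have "((\<lambda>t. \<mu>1 * W t powr (p + 1) + 2 * \<beta> * W t powr (q + 1) * V t powr (q + 1) + \<mu>2 * V t powr (p + 1))
     has_real_derivative (p + 1) * ?target) (at t)" by simp
  from DERIV_cmult[OF this, of "1 / (p + 1)"] show ?thesis using a by simp
qed

definition solves_damped_system ::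
    "real \<Rightarrow> real \<Rightarrow> real \<Rightarrow> real \<Rightarrow> real \<Rightarrow> real \<Rightarrow> (real \<Rightarrow> real) \<Rightarrow> (real \<Rightarrow> real) \<Rightarrow> bool" where
  "solves_damped_system \<tau> \<sigma> \<mu>1 \<mu>2 \<beta> q W V \<longleftrightarrow>
     (\<forall>t. W differentiable (at t) \<and> V differentiable (at t)
        \<and> deriv W differentiable (at t) \<and> deriv V differentiable (at t)
        \<and> deriv (deriv W) t + \<tau> * deriv W t - \<sigma> * W t
            + \<mu>1 * W t powr (2*q+1) + \<beta> * W t powr q * V t powr (q+1) = 0
        \<and> deriv (deriv V) t + \<tau> * deriv V t - \<sigma> * V t
            + \<mu>2 * V t powr (2*q+1) + \<beta> * V t powr q * W t powr (q+1) = 0)"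

lemma solves_damped_system_swap:
  "solves_damped_system \<tau> \<sigma> \<mu>1 \<mu>2 \<beta> q W V \<longleftrightarrow> solves_damped_system \<tau> \<sigma> \<mu>2 \<mu>1 \<beta> q V W"
  unfolding solves_damped_system_def by auto

lemma solves_damped_systemD:
  assumes "solves_damped_system \<tau> \<sigma> \<mu>1 \<mu>2 \<beta> q W V"
  shows "(W has_real_derivative deriv W t) (at t)"
    and "(deriv W has_real_derivative deriv (deriv W) t) (at t)"
    and "deriv (deriv W) t + \<tau> * deriv W t - \<sigma> * W t
            + \<mu>1 * W t powr (2*q+1) + \<beta> * W t powr q * V t powr (q+1) = 0"
  using assms unfolding solves_damped_system_def by (auto simp: DERIV_deriv_iff_real_differentiable)

lemma solves_damped_systemI:
  assumes "\<And>t. (W has_real_derivative W' t) (at t)" "\<And>t. (W' has_real_derivative W'' t) (at t)"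
    and "\<And>t. (V has_real_derivative V' t) (at t)" "\<And>t. (V' has_real_derivative V'' t) (at t)"
    and "\<And>t. W'' t + \<tau> * W' t - \<sigma> * W t + \<mu>1 * W t powr (2*q+1) + \<beta> * W t powr q * V t powr (q+1) = 0"
    and "\<And>t. V'' t + \<tau> * V' t - \<sigma> * V t + \<mu>2 * V t powr (2*q+1) + \<beta> * V t powr q * W t powr (q+1) = 0"
  shows "solves_damped_system \<tau> \<sigma> \<mu>1 \<mu>2 \<beta> q W V"
proof -
  have "deriv W = W'" "deriv V = V'" using assms(1,3) by (simp_all add: fun_eq_iff DERIV_imp_deriv)
  moreover have "deriv W' t = W'' t" "deriv V' t = V'' t" for t using assms(2,4) by (simp_all add: DERIV_imp_deriv)
  moreover have "W differentiable (at t)" "W' differentiable (at t)" "V differentiable (at t)" "V' differentiable (at t)" for t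
    using assms(1-4) unfolding real_differentiable_def by blast+
  ultimately show ?thesis unfolding solves_damped_system_def using assms(5,6) by simp
qed

lemma Psi_bar_has_real_derivative:
  assumes sol: "solves_damped_system \<tau> (sigma0 n p) \<mu>1 \<mu>2 \<beta> q W V"
    and nonneg: "\<And>s. 0 \<le> W s" "\<And>s. 0 \<le> V s" and q: "0 < q" and p: "p = 2 * q + 1"
  shows "(Psi_bar n p q \<mu>1 \<mu>2 \<beta> W V has_real_derivative - \<tau> * ((deriv W t)\<^sup>2 + (deriv V t)\<^sup>2)) (at t)"
proof -
  let ?\<sigma> = "sigma0 n p"
  note W = solves_damped_systemD[OF sol] and V = solves_damped_systemD[OF solves_damped_system_swap[THEN iffD1, OF sol]]
  have sq: "((\<lambda>t. (f t)\<^sup>2) has_real_derivative 2 * f t * f') (at t)"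
    if "(f has_real_derivative f') (at t)" for f :: "real \<Rightarrow> real" and f'
    using DERIV_power[OF that, of 2] by (simp add: algebra_simps)
  have "((\<lambda>t. (deriv W t)\<^sup>2 + (deriv V t)\<^sup>2 - ?\<sigma> * ((W t)\<^sup>2 + (V t)\<^sup>2)) has_real_derivative
      2 * deriv W t * deriv (deriv W) t + 2 * deriv V t * deriv (deriv V) t - ?\<sigma> * (2 * W t * deriv W t + 2 * V t * deriv V t)) (at t)"
    by (intro DERIV_diff DERIV_add DERIV_cmult sq W(1,2) V(1,2))
  from DERIV_add[OF DERIV_cmult[OF this, of "1/2"] coupling_potential_has_real_derivative[OF W(1) V(1) nonneg q p]]
  show ?thesis
    unfolding Psi_bar_def[abs_def]
  proof (rule DERIV_cong)
    have dd: "deriv (deriv W) t = ?\<sigma> * W t - \<tau> * deriv W t - (\<mu>1 * W t powr (2*q+1) + \<beta> * W t powr q * V t powr (q+1))"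
      "deriv (deriv V) t = ?\<sigma> * V t - \<tau> * deriv V t - (\<mu>2 * V t powr (2*q+1) + \<beta> * V t powr q * W t powr (q+1))"
      using W(3)[of t] V(3)[of t] by linarith+
    show "1/2 * (2 * deriv W t * deriv (deriv W) t + 2 * deriv V t * deriv (deriv V) t - ?\<sigma> * (2 * W t * deriv W t + 2 * V t * deriv V t))
        + (deriv W t * (\<mu>1 * W t powr (2*q+1) + \<beta> * W t powr q * V t powr (q+1))
          + deriv V t * (\<mu>2 * V t powr (2*q+1) + \<beta> * V t powr q * W t powr (q+1)))
        = - \<tau> * ((deriv W t)\<^sup>2 + (deriv V t)\<^sup>2)"
      unfolding dd by (simp add: power2_eq_square algebra_simps)
  qed
qed

lemma Psi_bar_mono:
  assumes sol: "solves_damped_system \<tau> (sigma0 n p) \<mu>1 \<mu>2 \<beta> q W V" and \<tau>: "\<tau> \<le> 0"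
    and nonneg: "\<And>s. 0 \<le> W s" "\<And>s. 0 \<le> V s" and q: "0 < q" and p: "p = 2 * q + 1"
  shows "mono (Psi_bar n p q \<mu>1 \<mu>2 \<beta> W V)"
proof (rule monoI)
  fix a b :: real assume "a \<le> b"
  have "0 \<le> - \<tau> * ((deriv W x)\<^sup>2 + (deriv V x)\<^sup>2)" for x
    using \<tau> by (intro mult_nonneg_nonneg) auto
  with \<open>a \<le> b\<close> show "Psi_bar n p q \<mu>1 \<mu>2 \<beta> W V a \<le> Psi_bar n p q \<mu>1 \<mu>2 \<beta> W V b"
    by (intro deriv_nonneg_imp_mono[OF Psi_bar_has_real_derivative[OF sol nonneg q p]])
qed

section \<open>Bounded solutions have bounded energy\<close>

lemma linear_growth_if_derivative_ge:
  fixes W W' :: "real \<Rightarrow> real"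
  assumes W: "\<And>t. (W has_real_derivative W' t) (at t)"
    and ge: "\<And>t. t0 \<le> t \<Longrightarrow> c \<le> W' t" and t: "t0 \<le> t"
  shows "W t0 + c * (t - t0) \<le> W t"
proof -
  have "W t0 - c * t0 \<le> W t - c * t"
  proof (rule DERIV_nonneg_imp_nondecreasing[OF t])
    fix x assume "t0 \<le> x"
    moreover have "((\<lambda>t. W t - c * t) has_real_derivative W' x - c) (at x)"
      using DERIV_diff[OF W DERIV_cmult[OF DERIV_ident, of c]] by simp
    ultimately show "\<exists>y. ((\<lambda>t. W t - c * t) has_real_derivative y) (at x) \<and> 0 \<le> y"
      using ge by force
  qed
  then show ?thesis by (simp add: algebra_simps)
qed

text \<open>Otherwise \<open>exp (- k t) (W' t - M / k)\<close> is nondecreasing from \<open>t0\<close> on, so \<open>W'\<close> stays above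
  a positive constant and \<open>W\<close> grows linearly.\<close>
lemma derivative_le_if_bounded:
  fixes W W' W'' :: "real \<Rightarrow> real"
  assumes k: "0 < k" and M: "0 \<le> M"
    and W: "\<And>t. (W has_real_derivative W' t) (at t)"
    and W': "\<And>t. (W' has_real_derivative W'' t) (at t)"
    and damped: "\<And>t. - M \<le> W'' t - k * W' t"
    and bdd: "\<And>t. A \<le> W t" "\<And>t. W t \<le> B"
  shows "W' t0 \<le> M / k"
proof (rule ccontr)
  assume "\<not> W' t0 \<le> M / k"
  define \<gamma> where "\<gamma> = W' t0 - M / k"
  have \<gamma>: "0 < \<gamma>" using \<open>\<not> W' t0 \<le> M / k\<close> unfolding \<gamma>_def by simp
  let ?g = "\<lambda>t. exp (- k * t) * (W' t - M / k)"
  have growth: "\<gamma> \<le> W' t" if "t0 \<le> t" for t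
  proof -
    have "?g t0 \<le> ?g t"
    proof (rule DERIV_nonneg_imp_nondecreasing[OF that])
      fix x
      have "(?g has_real_derivative exp (- k * x) * (W'' x - k * W' x + M)) (at x)"
        using k by (auto intro!: derivative_eq_intros W' simp: field_simps)
      moreover have "0 \<le> exp (- k * x) * (W'' x - k * W' x + M)"
        using damped[of x] by simp
      ultimately show "\<exists>y. (?g has_real_derivative y) (at x) \<and> 0 \<le> y" by blast
    qed
    moreover have "exp (- k * t) * \<gamma> \<le> exp (- k * t0) * \<gamma>" using \<gamma> k that by simp
    ultimately have "exp (- k * t) * \<gamma> \<le> exp (- k * t) * (W' t - M / k)" unfolding \<gamma>_def by linarith
    then have "\<gamma> \<le> W' t - M / k" by simp
    then show ?thesis using M k by (smt (verit) divide_nonneg_pos)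
  qed
  have "0 < (B - A + 1) / \<gamma>" using \<gamma> bdd(1)[of t0] bdd(2)[of t0] by simp
  then have "W t0 + (B - A + 1) \<le> W (t0 + (B - A + 1) / \<gamma>)"
    using linear_growth_if_derivative_ge[of W W' t0 \<gamma> "t0 + (B - A + 1) / \<gamma>", OF W growth] \<gamma> by simp
  then show False using bdd[of t0] bdd(2)[of "t0 + (B - A + 1) / \<gamma>"] by simp
qed

lemma abs_derivative_le_if_bounded:
  fixes W W' W'' :: "real \<Rightarrow> real"
  assumes k: "0 < k"
    and W: "\<And>t. (W has_real_derivative W' t) (at t)"
    and W': "\<And>t. (W' has_real_derivative W'' t) (at t)"
    and damped: "\<And>t. \<bar>W'' t - k * W' t\<bar> \<le> M"
    and bdd: "\<And>t. A \<le> W t" "\<And>t. W t \<le> B"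
  shows "\<bar>W' t\<bar> \<le> M / k"
proof -
  have M: "0 \<le> M" using damped[of 0] by simp
  have "W' t \<le> M / k"
  proof (rule derivative_le_if_bounded[OF k M W W' _ bdd])
    show "- M \<le> W'' t - k * W' t" for t using abs_le_D2[OF damped[of t]] by simp
  qed
  moreover have "- W' t \<le> M / k"
  proof (rule derivative_le_if_bounded[where W' = "\<lambda>t. - W' t", OF k M])
    show "((\<lambda>t. - W t) has_real_derivative - W' t) (at t)" for t using W by (rule DERIV_minus)
    show "((\<lambda>t. - W' t) has_real_derivative - W'' t) (at t)" for t using W' by (rule DERIV_minus)
    show "- M \<le> - W'' t - k * - W' t" for t using abs_le_D1[OF damped[of t]] by simp
    show "- B \<le> - W t" "- W t \<le> - A" for t using bdd[of t] by simp_all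
  qed
  ultimately show ?thesis by simp
qed

lemma coupling_term_le:
  fixes a b B \<mu> \<beta> q :: real
  assumes "0 \<le> a" "a \<le> B" "0 \<le> b" "b \<le> B" "0 \<le> \<mu>" "0 \<le> \<beta>" "0 \<le> q"
  shows "\<mu> * a powr (2*q+1) + \<beta> * a powr q * b powr (q+1) \<le> (\<mu> + \<beta>) * B powr (2*q+1)"
proof -
  have "\<mu> * a powr (2*q+1) \<le> \<mu> * B powr (2*q+1)"
    using assms by (intro mult_left_mono powr_mono2) auto
  moreover have "\<beta> * (a powr q * b powr (q+1)) \<le> \<beta> * (B powr q * B powr (q+1))"
    using assms by (intro mult_left_mono mult_mono powr_mono2) auto
  moreover have "B powr q * B powr (q+1) = B powr (2*q+1)"
    by (simp add: powr_add[symmetric] algebra_simps)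
  ultimately show ?thesis by (simp add: algebra_simps)
qed

lemma damped_residual_le:
  fixes Z D x y B \<tau> \<sigma> \<mu> \<beta> q :: real
  assumes ode: "Z + \<tau> * D - \<sigma> * x + \<mu> * x powr (2*q+1) + \<beta> * x powr q * y powr (q+1) = 0"
    and bounds: "0 \<le> x" "x \<le> B" "0 \<le> y" "y \<le> B" and coeffs: "0 \<le> \<mu>" "0 \<le> \<beta>" "0 \<le> q"
  shows "\<bar>Z + \<tau> * D\<bar> \<le> \<bar>\<sigma>\<bar> * B + (\<mu> + \<beta>) * B powr (2*q+1)"
proof -
  have "0 \<le> \<mu> * x powr (2*q+1) + \<beta> * x powr q * y powr (q+1)" using coeffs by simp
  moreover note coupling_term_le[OF bounds coeffs]
  moreover have "\<bar>\<sigma> * x\<bar> \<le> \<bar>\<sigma>\<bar> * B" using bounds by (simp add: abs_mult mult_left_mono)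
  ultimately show ?thesis using ode by (simp add: abs_le_iff)
qed

lemma abs_energy_le:
  fixes k1 k2 s g K1 K2 S G :: real
  assumes "0 \<le> k1" "0 \<le> k2" "k1 \<le> K1" "k2 \<le> K2" "\<bar>s\<bar> \<le> S" "0 \<le> g" "g \<le> G"
  shows "\<bar>1/2 * (k1 + k2 - s) + g\<bar> \<le> (K1 + K2) / 2 + S / 2 + G"
proof (rule abs_leI)
  show "1/2 * (k1 + k2 - s) + g \<le> (K1 + K2) / 2 + S / 2 + G" using assms abs_le_D2[OF assms(5)] by argo
  show "- (1/2 * (k1 + k2 - s) + g) \<le> (K1 + K2) / 2 + S / 2 + G" using assms abs_le_D1[OF assms(5)] by argo
qed

lemma coupling_potential_le:
  fixes a b B \<mu>1 \<mu>2 \<beta> q p :: real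
  assumes "0 \<le> a" "a \<le> B" "0 \<le> b" "b \<le> B" "0 \<le> \<mu>1" "0 \<le> \<mu>2" "0 \<le> \<beta>" "0 < q" "p = 2 * q + 1"
  shows "\<mu>1 * a powr (p + 1) + 2 * \<beta> * a powr (q + 1) * b powr (q + 1) + \<mu>2 * b powr (p + 1)
      \<le> (\<mu>1 + 2 * \<beta> + \<mu>2) * B powr (p + 1)"
proof -
  have "a powr (p + 1) \<le> B powr (p + 1)" "b powr (p + 1) \<le> B powr (p + 1)"
    using assms by (auto intro!: powr_mono2)
  moreover have "a powr (q + 1) * b powr (q + 1) \<le> B powr (q + 1) * B powr (q + 1)"
    using assms by (intro mult_mono powr_mono2) auto
  moreover have "B powr (q + 1) * B powr (q + 1) = B powr (p + 1)"
    unfolding assms(9) by (simp add: powr_add[symmetric] algebra_simps)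
  ultimately show ?thesis using assms(5-7) by (simp add: algebra_simps mult_left_mono add_mono)
qed

lemma solves_damped_system_slope_le:
  assumes sol: "solves_damped_system \<tau> \<sigma> \<mu>1 \<mu>2 \<beta> q W V" and \<tau>: "\<tau> < 0"
    and coeffs: "0 \<le> \<mu>1" "0 \<le> \<beta>" "0 \<le> q"
    and W: "\<And>t. 0 \<le> W t" "\<And>t. W t \<le> B" and V: "\<And>t. 0 \<le> V t" "\<And>t. V t \<le> B"
  shows "\<bar>deriv W t\<bar> \<le> (\<bar>\<sigma>\<bar> * B + (\<mu>1 + \<beta>) * B powr (2*q+1)) / (- \<tau>)"
proof (rule abs_derivative_le_if_bounded[OF _ solves_damped_systemD(1,2)[OF sol] _ W])
  show "0 < - \<tau>" using \<tau> by simp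
  show "\<bar>deriv (deriv W) t - - \<tau> * deriv W t\<bar> \<le> \<bar>\<sigma>\<bar> * B + (\<mu>1 + \<beta>) * B powr (2*q+1)" for t
    using damped_residual_le[OF solves_damped_systemD(3)[OF sol] W(1,2) V(1,2) coeffs, of t] by simp
qed

lemma Psi_bar_bounded:
  assumes sol: "solves_damped_system \<tau> (sigma0 n p) \<mu>1 \<mu>2 \<beta> q W V" and \<tau>: "\<tau> < 0"
    and coeffs: "0 \<le> \<mu>1" "0 \<le> \<mu>2" "0 \<le> \<beta>" and q: "0 < q" and p: "p = 2 * q + 1"
    and W: "\<And>t. 0 \<le> W t" "\<And>t. W t \<le> B" and V: "\<And>t. 0 \<le> V t" "\<And>t. V t \<le> B"
  shows "\<exists>C. \<forall>t. \<bar>Psi_bar n p q \<mu>1 \<mu>2 \<beta> W V t\<bar> \<le> C"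
proof -
  let ?\<sigma> = "sigma0 n p" and ?G = "(\<mu>1 + 2 * \<beta> + \<mu>2) * B powr (p + 1)"
  define D1 where "D1 = (\<bar>?\<sigma>\<bar> * B + (\<mu>1 + \<beta>) * B powr (2*q+1)) / (- \<tau>)"
  define D2 where "D2 = (\<bar>?\<sigma>\<bar> * B + (\<mu>2 + \<beta>) * B powr (2*q+1)) / (- \<tau>)"
  have slope: "\<bar>deriv W t\<bar> \<le> D1" "\<bar>deriv V t\<bar> \<le> D2" for t
    unfolding D1_def D2_def using q
      solves_damped_system_slope_le[OF sol \<tau> coeffs(1,3) _ W V]
      solves_damped_system_slope_le[OF solves_damped_system_swap[THEN iffD1, OF sol] \<tau> coeffs(2,3) _ V W]
    by simp_all
  have "\<bar>Psi_bar n p q \<mu>1 \<mu>2 \<beta> W V t\<bar> \<le> (D1\<^sup>2 + D2\<^sup>2) / 2 + \<bar>?\<sigma>\<bar> * (2 * B\<^sup>2) / 2 + 1 / (p + 1) * ?G" for t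
    unfolding Psi_bar_def
  proof (rule abs_energy_le)
    show "0 \<le> (deriv W t)\<^sup>2" "0 \<le> (deriv V t)\<^sup>2" by simp_all
    show "(deriv W t)\<^sup>2 \<le> D1\<^sup>2" "(deriv V t)\<^sup>2 \<le> D2\<^sup>2"
      using slope[of t] by (simp_all add: abs_le_square_iff[symmetric])
    have "(W t)\<^sup>2 \<le> B\<^sup>2" "(V t)\<^sup>2 \<le> B\<^sup>2" using W V by (auto intro!: power_mono)
    then show "\<bar>?\<sigma> * ((W t)\<^sup>2 + (V t)\<^sup>2)\<bar> \<le> \<bar>?\<sigma>\<bar> * (2 * B\<^sup>2)"
      by (simp add: abs_mult mult_left_mono)
    show "0 \<le> 1 / (p + 1) * (\<mu>1 * W t powr (p + 1) + 2 * \<beta> * W t powr (q + 1) * V t powr (q + 1) + \<mu>2 * V t powr (p + 1))"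
      using coeffs p q by simp
    show "1 / (p + 1) * (\<mu>1 * W t powr (p + 1) + 2 * \<beta> * W t powr (q + 1) * V t powr (q + 1) + \<mu>2 * V t powr (p + 1))
        \<le> 1 / (p + 1) * ?G"
      using coupling_potential_le[OF W(1,2) V(1,2) coeffs q p, of t t] p q by (simp add: divide_right_mono)
  qed
  then show ?thesis by blast
qed

section \<open>Universal decay of radial supersolutions\<close>

lemma scaled_le_if_inverse_powr_ge:
  fixes y r \<kappa> p :: real
  assumes y: "0 < y" and r: "0 < r" and \<kappa>: "0 < \<kappa>" and p: "1 < p"
    and ge: "\<kappa> * r\<^sup>2 \<le> y powr (1 - p)"
  shows "r powr (2 / (p - 1)) * y \<le> (1 / \<kappa>) powr (1 / (p - 1))"
proof -
  define X where "X = r powr (2 / (p - 1)) * y"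
  have X: "0 < X" unfolding X_def using r y by simp
  have "X powr (p - 1) = r powr (2 / (p - 1) * (p - 1)) * y powr (p - 1)"
    unfolding X_def using r y by (simp add: powr_mult powr_powr)
  also have "\<dots> = r\<^sup>2 / y powr (1 - p)"
  proof -
    have "2 / (p - 1) * (p - 1) = 2" using p by (simp add: field_simps)
    moreover have "y powr (p - 1) = 1 / y powr (1 - p)"
      using powr_minus_divide[of y "1 - p"] by simp
    ultimately show ?thesis using r by simp
  qed
  also have "\<dots> \<le> r\<^sup>2 / (\<kappa> * r\<^sup>2)"
    using ge y r \<kappa> by (intro divide_left_mono) auto
  also have "\<dots> = 1 / \<kappa>" using r by simp
  finally have "X powr (p - 1) \<le> 1 / \<kappa>" .
  then have "(X powr (p - 1)) powr (1 / (p - 1)) \<le> (1 / \<kappa>) powr (1 / (p - 1))"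
    using p X by (intro powr_mono2) auto
  then show ?thesis using p unfolding X_def[symmetric] by (simp add: powr_powr)
qed

text \<open>The radial form \<open>-(r^(n-1) \<phi>')' = r^(n-1) F\<close> of \<open>-\<Delta>\<phi> = F \<ge> \<mu> \<phi>^p\<close>.\<close>
locale radial_power_supersolution =
  fixes \<phi> \<phi>' F :: "real \<Rightarrow> real" and n :: nat and \<mu> p :: real
  assumes p_gt_1: "1 < p" and \<mu>_pos: "0 < \<mu>" and n_pos: "1 \<le> n"
    and has_derivative: "\<And>r. 0 < r \<Longrightarrow> (\<phi> has_real_derivative \<phi>' r) (at r)"
    and flux_has_derivative: "\<And>r. 0 < r \<Longrightarrow> ((\<lambda>s. s ^ (n - 1) * \<phi>' s) has_real_derivative - (r ^ (n - 1) * F r)) (at r)"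
    and power_le_F: "\<And>r. 0 < r \<Longrightarrow> \<mu> * \<phi> r powr p \<le> F r"
    and nonneg: "\<And>r. 0 < r \<Longrightarrow> 0 \<le> \<phi> r"
begin

definition flux :: "real \<Rightarrow> real" where
  "flux s = s ^ (n - 1) * \<phi>' s"

lemma flux_antimono:
  assumes "0 < a" "a \<le> b"
  shows "flux b \<le> flux a"
proof (rule DERIV_nonpos_imp_nonincreasing[OF assms(2)])
  fix x assume "a \<le> x"
  with assms have x: "0 < x" by simp
  have "0 \<le> F x" using power_le_F[OF x] \<mu>_pos by (smt (verit) mult_nonneg_nonneg powr_ge_zero)
  then show "\<exists>y. (flux has_real_derivative y) (at x) \<and> y \<le> 0"
    using flux_has_derivative[OF x] x unfolding flux_def[abs_def] by (intro exI[of _ "- (x ^ (n - 1) * F x)"]) simp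
qed

lemma derivative_eq_flux: "0 < s \<Longrightarrow> \<phi>' s = flux s / s ^ (n - 1)"
  unfolding flux_def by simp

lemma antimono_if_flux_nonpos:
  assumes "0 < a" "a \<le> b" "\<And>s. a \<le> s \<Longrightarrow> s \<le> b \<Longrightarrow> flux s \<le> 0"
  shows "\<phi> b \<le> \<phi> a"
proof (rule DERIV_nonpos_imp_nonincreasing[OF assms(2)])
  fix x assume x: "a \<le> x" "x \<le> b"
  then have "\<phi>' x \<le> 0" using assms(1,3) by (simp add: derivative_eq_flux divide_nonpos_pos)
  then show "\<exists>y. (\<phi> has_real_derivative y) (at x) \<and> y \<le> 0" using has_derivative[of x] x assms(1) by auto
qed

lemma mono_if_flux_nonneg:
  assumes "0 < a" "a \<le> b" "\<And>s. a \<le> s \<Longrightarrow> s \<le> b \<Longrightarrow> 0 \<le> flux s"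
  shows "\<phi> a \<le> \<phi> b"
proof (rule DERIV_nonneg_imp_nondecreasing[OF assms(2)])
  fix x assume x: "a \<le> x" "x \<le> b"
  then have "0 \<le> \<phi>' x" using assms(1,3) by (simp add: derivative_eq_flux)
  then show "\<exists>y. (\<phi> has_real_derivative y) (at x) \<and> 0 \<le> y" using has_derivative[of x] x assms(1) by auto
qed

lemma flux_decrease:
  assumes "0 < a" "a \<le> b" "0 \<le> c" "\<And>s. a \<le> s \<Longrightarrow> s \<le> b \<Longrightarrow> c \<le> \<phi> s"
  shows "flux b \<le> flux a - \<mu> * c powr p * (b ^ n - a ^ n) / n"
proof -
  let ?g = "\<lambda>s. flux s + \<mu> * c powr p * s ^ n / n"
  have "?g b \<le> ?g a"
  proof (rule DERIV_nonpos_imp_nonincreasing[OF assms(2)])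
    fix x assume x: "a \<le> x" "x \<le> b"
    have x0: "0 < x" using x assms by simp
    have "((\<lambda>s. \<mu> * c powr p * s ^ n / n) has_real_derivative \<mu> * c powr p * (n * x ^ (n - 1)) / n) (at x)"
      by (intro derivative_eq_intros) (use n_pos in auto)
    with flux_has_derivative[OF x0]
    have d: "(?g has_real_derivative - (x ^ (n - 1) * F x) + \<mu> * c powr p * (n * x ^ (n - 1)) / n) (at x)"
      unfolding flux_def[abs_def] by (rule DERIV_add)
    have "\<mu> * c powr p \<le> F x"
      using power_le_F[OF x0] powr_mono2[of p c "\<phi> x"] assms(3,4) x p_gt_1 \<mu>_pos
      by (smt (verit) mult_left_mono)
    then have "- (x ^ (n - 1) * F x) + \<mu> * c powr p * (n * x ^ (n - 1)) / n \<le> 0"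
      using n_pos x0 by (simp add: mult_left_mono)
    with d show "\<exists>y. (?g has_real_derivative y) (at x) \<and> y \<le> 0" by blast
  qed
  then show ?thesis by (simp add: diff_divide_distrib algebra_simps)
qed

definition slope_const :: real where
  "slope_const = \<mu> * (1 - 1 / 2 ^ n) / n"

lemma slope_const_pos: "0 < slope_const"
proof -
  have "(1::real) / 2 ^ n < 1" using n_pos by (simp add: field_simps)
  then show ?thesis unfolding slope_const_def using \<mu>_pos n_pos by simp
qed

lemma derivative_estimate:
  assumes r: "0 < r" and flux: "flux (r / 2) \<le> 0"
  shows "\<phi>' r \<le> - slope_const * r * \<phi> r powr p"
proof -
  have flux_nonpos: "flux s \<le> 0" if "r / 2 \<le> s" for s
    using flux_antimono[of "r / 2" s] that flux r by simp
  have "\<phi> r \<le> \<phi> s" if "r / 2 \<le> s" "s \<le> r" for s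
    by (rule antimono_if_flux_nonpos) (use that r flux_nonpos in auto)
  then have "flux r \<le> flux (r / 2) - \<mu> * \<phi> r powr p * (r ^ n - (r / 2) ^ n) / n"
    using r nonneg by (intro flux_decrease) auto
  also have "\<dots> \<le> - \<mu> * \<phi> r powr p * (r ^ n - (r / 2) ^ n) / n" using flux by simp
  also have "\<dots> = - slope_const * r * \<phi> r powr p * r ^ (n - 1)"
  proof -
    have "r ^ n = r * r ^ (n - 1)" using n_pos by (simp add: power_eq_if)
    then show ?thesis unfolding slope_const_def using n_pos by (simp add: field_simps)
  qed
  finally show ?thesis using r by (simp add: derivative_eq_flux pos_divide_le_eq)
qed

definition decay_const :: real where
  "decay_const = (p - 1) * slope_const * 3 / 8"

lemma decay_const_pos: "0 < decay_const"
  unfolding decay_const_def using p_gt_1 slope_const_pos by simp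

text \<open>Integrate \<open>(\<phi> powr (1 - p))' \<ge> (p - 1) * slope_const * s\<close> over \<open>[r/2, r]\<close>.\<close>
lemma inverse_power_growth:
  assumes r: "0 < r" and flux: "flux (r / 4) \<le> 0" and pos: "0 < \<phi> r"
  shows "decay_const * r\<^sup>2 \<le> \<phi> r powr (1 - p)"
proof -
  have flux_nonpos: "flux s \<le> 0" if "r / 4 \<le> s" for s
    using flux_antimono[of "r / 4" s] that flux r by simp
  have ge: "\<phi> r \<le> \<phi> s" if "r / 2 \<le> s" "s \<le> r" for s
    by (rule antimono_if_flux_nonpos) (use that r flux_nonpos in auto)
  let ?h = "\<lambda>s. \<phi> s powr (1 - p) - (p - 1) * slope_const * s\<^sup>2 / 2"
  have "?h (r / 2) \<le> ?h r"
  proof (rule DERIV_nonneg_imp_nondecreasing[where f = ?h])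
    fix x assume x: "r / 2 \<le> x" "x \<le> r"
    have x0: "0 < x" using x r by simp
    have \<phi>x: "0 < \<phi> x" using ge[OF x] pos by simp
    have "((\<lambda>s. \<phi> s powr (1 - p)) has_real_derivative (1 - p) * \<phi> x powr (- p) * \<phi>' x) (at x)"
      using DERIV_fun_powr[OF has_derivative[OF x0] \<phi>x, of "1 - p"] by simp
    moreover have "((\<lambda>s. (p - 1) * slope_const * s\<^sup>2 / 2) has_real_derivative (p - 1) * slope_const * (2 * x) / 2) (at x)"
      by (intro derivative_eq_intros) auto
    ultimately have d: "(?h has_real_derivative (1 - p) * \<phi> x powr (- p) * \<phi>' x - (p - 1) * slope_const * x) (at x)"
      by (rule DERIV_diff[THEN DERIV_cong]) simp
    have "(1 - p) * \<phi> x powr (- p) * (- slope_const * x * \<phi> x powr p) \<le> (1 - p) * \<phi> x powr (- p) * \<phi>' x"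
      using derivative_estimate[OF x0 flux_nonpos] x p_gt_1
      by (intro mult_left_mono_neg) (auto simp: mult_nonpos_nonneg)
    moreover have "(1 - p) * \<phi> x powr (- p) * (- slope_const * x * \<phi> x powr p) = (p - 1) * slope_const * x"
      using \<phi>x by (simp add: powr_minus field_simps)
    ultimately have "0 \<le> (1 - p) * \<phi> x powr (- p) * \<phi>' x - (p - 1) * slope_const * x" by linarith
    with d show "\<exists>y. (?h has_real_derivative y) (at x) \<and> 0 \<le> y" by blast
  qed (use r in simp)
  moreover have "(p - 1) * slope_const * r\<^sup>2 / 2 - (p - 1) * slope_const * (r / 2)\<^sup>2 / 2 = decay_const * r\<^sup>2"
    unfolding decay_const_def by (simp add: power2_eq_square field_simps)
  moreover have "0 \<le> \<phi> (r / 2) powr (1 - p)" by simp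
  ultimately show ?thesis by linarith
qed

lemma decay_estimate:
  assumes "0 < r" "flux (r / 4) \<le> 0"
  shows "r powr (2 / (p - 1)) * \<phi> r \<le> (1 / decay_const) powr (1 / (p - 1))"
proof (cases "\<phi> r = 0")
  case False
  then have "0 < \<phi> r" using nonneg[OF assms(1)] by simp
  then show ?thesis
    using scaled_le_if_inverse_powr_ge[OF _ assms(1) decay_const_pos p_gt_1 inverse_power_growth[OF assms]] by blast
qed simp

lemma vanishes_if_flux_pos:
  assumes flux_pos: "\<And>r. 0 < r \<Longrightarrow> 0 < flux r" and r0: "0 < r0"
  shows "\<phi> r0 = 0"
proof (rule ccontr)
  assume "\<phi> r0 \<noteq> 0"
  define A where "A = \<mu> * \<phi> r0 powr p"
  have A: "0 < A" unfolding A_def using \<open>\<phi> r0 \<noteq> 0\<close> nonneg[OF r0] \<mu>_pos by simp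
  define s where "s = 1 + r0 ^ n + n * flux r0 / A"
  have s1: "1 \<le> s" unfolding s_def using A flux_pos[OF r0] r0 by simp
  have r0s: "r0 \<le> s"
  proof (cases "r0 \<le> 1")
    case False
    then have "r0 \<le> r0 ^ n" using n_pos by (metis power_increasing power_one_right less_imp_le not_le)
    then show ?thesis unfolding s_def using A flux_pos[OF r0] by (smt (verit) divide_nonneg_pos of_nat_0_le_iff mult_nonneg_nonneg)
  qed (use s1 in simp)
  have "s \<le> s ^ n" using n_pos s1 by (metis power_increasing power_one_right)
  then have "n * flux r0 / A < s ^ n - r0 ^ n" unfolding s_def by linarith
  then have "n * flux r0 < A * (s ^ n - r0 ^ n)" using A by (simp add: pos_divide_less_eq mult.commute)
  then have "flux r0 < A * (s ^ n - r0 ^ n) / n" using n_pos by (simp add: pos_less_divide_eq mult.commute)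
  moreover have "\<phi> r0 \<le> \<phi> z" if "r0 \<le> z" for z
    using that r0 flux_pos by (intro mono_if_flux_nonneg) (auto intro: less_imp_le)
  then have "flux s \<le> flux r0 - A * (s ^ n - r0 ^ n) / n"
    unfolding A_def using r0 r0s nonneg by (intro flux_decrease) auto
  ultimately have "flux s < 0" by linarith
  with flux_pos[of s] s1 show False by simp
qed

lemma scaled_le_if_flux_pos:
  assumes r: "0 < r" "r \<le> r0" and flux: "0 < flux r0"
  shows "r powr (2 / (p - 1)) * \<phi> r \<le> r0 powr (2 / (p - 1)) * \<phi> r0"
proof (rule mult_mono)
  show "\<phi> r \<le> \<phi> r0"
    using r flux flux_antimono by (intro mono_if_flux_nonneg) (auto intro: order.trans[OF less_imp_le])
  show "r powr (2 / (p - 1)) \<le> r0 powr (2 / (p - 1))"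
    using r p_gt_1 by (intro powr_mono2) auto
qed (use r nonneg in auto)

lemma scaled_bounded_on_interval:
  assumes "0 < a"
  shows "\<exists>B. \<forall>r\<in>{a..b}. r powr (2 / (p - 1)) * \<phi> r \<le> B"
proof -
  have "continuous_on {a..b} (\<lambda>r. r powr (2 / (p - 1)) * \<phi> r)"
  proof (intro continuous_at_imp_continuous_on ballI)
    fix x assume "x \<in> {a..b}"
    then have x: "0 < x" using assms by simp
    with DERIV_isCont[OF has_derivative[OF x]]
    show "isCont (\<lambda>r. r powr (2 / (p - 1)) * \<phi> r) x" by (intro continuous_intros) auto
  qed
  from compact_imp_bounded[OF compact_continuous_image[OF this compact_Icc]]
  show ?thesis unfolding bounded_real by (meson abs_le_D1 image_eqI)
qed

lemma scaled_profile_bounded: "\<exists>B. \<forall>r>0. r powr (2 / (p - 1)) * \<phi> r \<le> B"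
proof -
  define K where "K = (1 / decay_const) powr (1 / (p - 1))"
  have K: "r powr (2 / (p - 1)) * \<phi> r \<le> K" if "0 < r" "flux r1 \<le> 0" "r1 \<le> r / 4" "0 < r1" for r r1
    unfolding K_def using that flux_antimono[of r1 "r / 4"] by (intro decay_estimate) auto
  consider (pos) "\<forall>r>0. 0 < flux r" | (nonpos) "\<forall>r>0. flux r \<le> 0"
    | (mixed) r0 r1 where "0 < r0" "0 < flux r0" "0 < r1" "flux r1 \<le> 0"
    by (meson not_le)
  then show ?thesis
  proof cases
    case pos
    then show ?thesis using vanishes_if_flux_pos by auto
  next
    case nonpos
    then show ?thesis using K[of _ "r / 4" for r] by (intro exI[of _ K]) auto
  next
    case mixed
    obtain B where B: "\<forall>r\<in>{r0..4 * r1}. r powr (2 / (p - 1)) * \<phi> r \<le> B"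
      using scaled_bounded_on_interval[OF \<open>0 < r0\<close>] by blast
    have "r powr (2 / (p - 1)) * \<phi> r \<le> max K (max B (r0 powr (2 / (p - 1)) * \<phi> r0))" if r: "0 < r" for r
    proof -
      consider "r \<le> r0" | "r0 \<le> r" "r \<le> 4 * r1" | "4 * r1 \<le> r" by linarith
      then show ?thesis
      proof cases
        case 1
        then show ?thesis using scaled_le_if_flux_pos[OF r 1 \<open>0 < flux r0\<close>] by simp
      next
        case 2
        with B have "r powr (2 / (p - 1)) * \<phi> r \<le> B" by simp
        then show ?thesis by (simp add: le_max_iff_disj)
      next
        case 3
        then show ?thesis using K[OF r \<open>flux r1 \<le> 0\<close> _ \<open>0 < r1\<close>] by simp
      qed
    qed
    then show ?thesis by blast
  qed
qed

end

section \<open>The transformed radial solution\<close>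

lemma wbar_eq_emden_fowler:
  fixes u :: "real^'n::finite \<Rightarrow> real"
  assumes rad: "radial u" and e: "norm e = 1" and p: "1 < p"
  shows "wbar e p u t = exp (2 / (p - 1) * t) * radial_profile k u (exp t)"
proof -
  have "e \<noteq> 0" using e by auto
  have "(1 / (norm (exp (- t) *\<^sub>R e))\<^sup>2) *\<^sub>R exp (- t) *\<^sub>R e = exp t *\<^sub>R e"
    using e by (simp add: exp_minus power2_eq_square inverse_eq_divide)
  then have "kelvin u (exp (- t) *\<^sub>R e) = exp ((real CARD('n) - 2) * t) * radial_profile k u (exp t)"
    using radial_eq_profile[OF rad, of "exp t *\<^sub>R e" k] \<open>e \<noteq> 0\<close> e
    unfolding kelvin_def by (simp add: exp_powr_real algebra_simps)
  moreover have "exp (- delta0 (real CARD('n)) p * t) * exp ((real CARD('n) - 2) * t) = exp (2 / (p - 1) * t)"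
    unfolding delta0_eq[OF p] exp_add[symmetric] by (simp add: algebra_simps)
  ultimately show ?thesis unfolding wbar_def by (simp add: mult.assoc[symmetric])
qed

lemma solves_S_swap: "solves_S \<mu>1 \<mu>2 \<beta> q u v \<longleftrightarrow> solves_S \<mu>2 \<mu>1 \<beta> q v u"
  unfolding solves_S_def by auto

lemma wbar_nonneg:
  fixes u v :: "real^'n::finite \<Rightarrow> real"
  assumes "solves_S \<mu>1 \<mu>2 \<beta> q u v" "norm e = 1"
  shows "0 \<le> wbar e p u t"
proof -
  have "exp (- t) *\<^sub>R e \<noteq> 0" using assms(2) by auto
  then have "0 \<le> u ((1 / (norm (exp (- t) *\<^sub>R e))\<^sup>2) *\<^sub>R exp (- t) *\<^sub>R e)"
    using assms(1) unfolding solves_S_def by simp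
  then show ?thesis unfolding wbar_def kelvin_def by simp
qed

lemma wbar_transformed_equation:
  fixes u v :: "real^'n::finite \<Rightarrow> real"
  assumes C2: "C2_on (-{0}) u" and rad: "radial u" "radial v"
    and eq: "\<And>x. x \<noteq> 0 \<Longrightarrow> - laplacian u x = \<mu> * u x powr (2*q+1) + \<beta> * u x powr q * v x powr (q+1)"
    and p: "p = 2 * q + 1" "0 < q" and n: "CARD('n) \<noteq> 2" and e: "norm e = 1"
  obtains W' W'' where "\<And>t. (wbar e p u has_real_derivative W' t) (at t)"
    and "\<And>t. (W' has_real_derivative W'' t) (at t)"
    and "\<And>t. W'' t + tau0 (real CARD('n)) p * W' t - sigma0 (real CARD('n)) p * wbar e p u t
        + \<mu> * wbar e p u t powr (2*q+1) + \<beta> * wbar e p u t powr q * wbar e p v t powr (q+1) = 0"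
proof -
  obtain k :: 'n where True by simp
  define m where "m = 2 / (p - 1)"
  have p1: "1 < p" using p by simp
  have mp: "m * (2 * q + 1) = m + 2" unfolding m_def using p by (simp add: field_simps)
  let ?\<phi> = "radial_profile k u" and ?\<phi>' = "radial_profile k (partial k u)"
    and ?\<phi>'' = "radial_profile k (partial k (partial k u))" and ?\<zeta> = "radial_profile k v"
  have "(?\<phi> has_real_derivative ?\<phi>' r) (at r)" "(?\<phi>' has_real_derivative ?\<phi>'' r) (at r)" if "0 < r" for r
    using radial_profile_derivatives[OF C2] that by simp_all
  note EF = emden_fowler_transform[of ?\<phi> ?\<phi>' ?\<phi>'' m, OF this]
  have wu: "wbar e p u t = exp (m * t) * ?\<phi> (exp t)" and wv: "wbar e p v t = exp (m * t) * ?\<zeta> (exp t)" for t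
    using wbar_eq_emden_fowler[OF rad(1) e p1] wbar_eq_emden_fowler[OF rad(2) e p1] unfolding m_def by simp_all
  show ?thesis
  proof (rule that)
    show "(wbar e p u has_real_derivative exp (m * t) * (m * ?\<phi> (exp t) + exp t * ?\<phi>' (exp t))) (at t)" for t
      unfolding wu[abs_def] by (rule EF(1))
    show "((\<lambda>t. exp (m * t) * (m * ?\<phi> (exp t) + exp t * ?\<phi>' (exp t))) has_real_derivative
        exp (m * t) * (m\<^sup>2 * ?\<phi> (exp t) + (2 * m + 1) * exp t * ?\<phi>' (exp t) + (exp t)\<^sup>2 * ?\<phi>'' (exp t))) (at t)" for t
      by (rule EF(2))
    fix t
    have "tau0 (real CARD('n)) p = real CARD('n) - 2 - 2 * m" "sigma0 (real CARD('n)) p = m * (real CARD('n) - 2 - m)"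
      unfolding m_def using tau0_eq[OF p1] sigma0_eq[OF p1] n by simp_all
    then have "exp (m * t) * (m\<^sup>2 * ?\<phi> (exp t) + (2 * m + 1) * exp t * ?\<phi>' (exp t) + (exp t)\<^sup>2 * ?\<phi>'' (exp t))
        + tau0 (real CARD('n)) p * (exp (m * t) * (m * ?\<phi> (exp t) + exp t * ?\<phi>' (exp t)))
        - sigma0 (real CARD('n)) p * wbar e p u t
        = exp (m * t) * (exp t)\<^sup>2 * (?\<phi>'' (exp t) + (real CARD('n) - 1) / exp t * ?\<phi>' (exp t))"
      unfolding wu using EF(3) by simp
    also have "\<dots> = - (exp (m * t) * (exp t)\<^sup>2 * (\<mu> * ?\<phi> (exp t) powr (2*q+1) + \<beta> * ?\<phi> (exp t) powr q * ?\<zeta> (exp t) powr (q+1)))"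
      using radial_profile_equation[OF C2 rad(1) eq, of "exp t" k] by (simp add: distrib_left right_diff_distrib)
    also have "\<dots> = - (\<mu> * wbar e p u t powr (2*q+1) + \<beta> * wbar e p u t powr q * wbar e p v t powr (q+1))"
      unfolding wu wv coupling_exp_scaling[OF mp] ..
    finally show "exp (m * t) * (m\<^sup>2 * ?\<phi> (exp t) + (2 * m + 1) * exp t * ?\<phi>' (exp t) + (exp t)\<^sup>2 * ?\<phi>'' (exp t))
        + tau0 (real CARD('n)) p * (exp (m * t) * (m * ?\<phi> (exp t) + exp t * ?\<phi>' (exp t)))
        - sigma0 (real CARD('n)) p * wbar e p u t
        + \<mu> * wbar e p u t powr (2*q+1) + \<beta> * wbar e p u t powr q * wbar e p v t powr (q+1) = 0"
      by argo
  qed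
qed

lemma wbar_solves_damped_system:
  fixes u v :: "real^'n::finite \<Rightarrow> real"
  assumes sol: "solves_S \<mu>1 \<mu>2 \<beta> q u v" and rad: "radial u" "radial v"
    and p: "p = 2 * q + 1" "0 < q" and n: "CARD('n) \<noteq> 2" and e: "norm e = 1"
  shows "solves_damped_system (tau0 (real CARD('n)) p) (sigma0 (real CARD('n)) p) \<mu>1 \<mu>2 \<beta> q
           (wbar e p u) (wbar e p v)"
proof -
  have C2: "C2_on (-{0}) u" "C2_on (-{0}) v"
    and eq: "\<And>x. x \<noteq> 0 \<Longrightarrow> - laplacian u x = \<mu>1 * u x powr (2*q+1) + \<beta> * u x powr q * v x powr (q+1)"
      "\<And>x. x \<noteq> 0 \<Longrightarrow> - laplacian v x = \<mu>2 * v x powr (2*q+1) + \<beta> * v x powr q * u x powr (q+1)"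
    using sol unfolding solves_S_def by auto
  obtain U' U'' where U: "\<And>t. (wbar e p u has_real_derivative U' t) (at t)" "\<And>t. (U' has_real_derivative U'' t) (at t)"
    "\<And>t. U'' t + tau0 (real CARD('n)) p * U' t - sigma0 (real CARD('n)) p * wbar e p u t
        + \<mu>1 * wbar e p u t powr (2*q+1) + \<beta> * wbar e p u t powr q * wbar e p v t powr (q+1) = 0"
    using wbar_transformed_equation[OF C2(1) rad eq(1) p n e] by blast
  obtain V' V'' where V: "\<And>t. (wbar e p v has_real_derivative V' t) (at t)" "\<And>t. (V' has_real_derivative V'' t) (at t)"
    "\<And>t. V'' t + tau0 (real CARD('n)) p * V' t - sigma0 (real CARD('n)) p * wbar e p v t
        + \<mu>2 * wbar e p v t powr (2*q+1) + \<beta> * wbar e p v t powr q * wbar e p u t powr (q+1) = 0"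
    using wbar_transformed_equation[OF C2(2) rad(2,1) eq(2) p n e] by blast
  show ?thesis by (rule solves_damped_systemI[OF U(1,2) V(1,2) U(3) V(3)])
qed

lemma wbar_bounded:
  fixes u v :: "real^'n::finite \<Rightarrow> real"
  assumes sol: "solves_S \<mu> \<mu>' \<beta> q u v" and rad: "radial u"
    and \<mu>: "0 < \<mu>" and \<beta>: "0 \<le> \<beta>" and p: "p = 2 * q + 1" "0 < q" and e: "norm e = 1"
  shows "\<exists>B. \<forall>t. wbar e p u t \<le> B"
proof -
  have C2: "C2_on (-{0}) u"
    and eq: "\<And>x. x \<noteq> 0 \<Longrightarrow> - laplacian u x = \<mu> * u x powr (2*q+1) + \<beta> * u x powr q * v x powr (q+1)"
    and nonneg: "\<And>x. x \<noteq> 0 \<Longrightarrow> 0 \<le> u x" "\<And>x. x \<noteq> 0 \<Longrightarrow> 0 \<le> v x"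
    using sol unfolding solves_S_def by auto
  obtain k :: 'n where True by simp
  let ?\<phi> = "radial_profile k u" and ?\<phi>' = "radial_profile k (partial k u)"
  define F where "F r = \<mu> * ?\<phi> r powr (2*q+1) + \<beta> * ?\<phi> r powr q * radial_profile k v r powr (q+1)" for r
  interpret radial_power_supersolution ?\<phi> ?\<phi>' F "CARD('n)" \<mu> p
  proof
    show "1 < p" "0 < \<mu>" "1 \<le> CARD('n)" using p \<mu> by simp_all
    show "(?\<phi> has_real_derivative ?\<phi>' r) (at r)" if "0 < r" for r
      using radial_profile_derivatives(1)[OF C2] that by simp
    show "((\<lambda>s. s ^ (CARD('n) - 1) * ?\<phi>' s) has_real_derivative - (r ^ (CARD('n) - 1) * F r)) (at r)" if r: "0 < r" for r
    proof -
      have d: "((\<lambda>s. s ^ (CARD('n) - 1) * ?\<phi>' s) has_real_derivative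
          r ^ (CARD('n) - 1) * (radial_profile k (partial k (partial k u)) r + (real CARD('n) - 1) / r * ?\<phi>' r)) (at r)"
        using radial_profile_derivatives(2)[OF C2, of r k] r by (intro power_mult_has_real_derivative) simp_all
      show ?thesis
        using radial_profile_equation[OF C2 rad eq r, of k] d unfolding F_def by (simp add: distrib_left right_diff_distrib)
    qed
    show "\<mu> * ?\<phi> r powr p \<le> F r" "0 \<le> ?\<phi> r" if "0 < r" for r
      using \<beta> nonneg[of "r *\<^sub>R axis k 1"] that unfolding F_def p radial_profile_def by simp_all
  qed
  obtain B where B: "\<And>r. 0 < r \<Longrightarrow> r powr (2 / (p - 1)) * ?\<phi> r \<le> B"
    using scaled_profile_bounded by blast
  have "wbar e p u t \<le> B" for t
    using B[of "exp t"] wbar_eq_emden_fowler[OF rad e p_gt_1, of t k] by (simp add: exp_powr_real mult.commute)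
  then show ?thesis by blast
qed

theorem lemma4p5:
  fixes u v :: "real^'n \<Rightarrow> real" and e :: "real^'n"
    and \<mu>1 \<mu>2 \<beta> p q :: real
  defines "N \<equiv> real CARD('n)"
  defines "w1 \<equiv> wbar e p u" and "w2 \<equiv> wbar e p v"
  assumes n3: "CARD('n) \<ge> 3"
    and pos: "\<mu>1 > 0" "\<mu>2 > 0" "\<beta> > 0"
    and pq: "p = 2 * q + 1"
    and prange: "N / (N - 2) < p" "p < (N + 2) / (N - 2)"
    and sol: "solves_S \<mu>1 \<mu>2 \<beta> q u v"
    and rad: "radial u" "radial v"
    and e: "norm e = 1"
  shows "(\<forall>t. w1 differentiable (at t) \<and> w2 differentiable (at t)
            \<and> deriv w1 differentiable (at t) \<and> deriv w2 differentiable (at t)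
            \<and> deriv (deriv w1) t + tau0 N p * deriv w1 t - sigma0 N p * w1 t
                + \<mu>1 * w1 t powr (2*q+1) + \<beta> * w1 t powr q * w2 t powr (q+1) = 0
            \<and> deriv (deriv w2) t + tau0 N p * deriv w2 t - sigma0 N p * w2 t
                + \<mu>2 * w2 t powr (2*q+1) + \<beta> * w2 t powr q * w1 t powr (q+1) = 0)
       \<and> mono (Psi_bar N p q \<mu>1 \<mu>2 \<beta> w1 w2)
       \<and> (\<exists>C. \<forall>t. \<bar>Psi_bar N p q \<mu>1 \<mu>2 \<beta> w1 w2 t\<bar> \<le> C)
       \<and> (\<forall>t. (Psi_bar N p q \<mu>1 \<mu>2 \<beta> w1 w2 has_real_derivative
                 (- tau0 N p * ((deriv w1 t)\<^sup>2 + (deriv w2 t)\<^sup>2))) (at t))"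
proof -
  have N: "2 < N" "CARD('n) \<noteq> 2" using n3 unfolding N_def by auto
  have "1 < N / (N - 2)" using N(1) by simp
  with prange(1) have p1: "1 < p" by linarith
  have q: "0 < q" using p1 pq by simp
  have \<tau>: "tau0 N p < 0" using tau0_neg[OF N(1) p1 prange(2)] .
  have sol': "solves_S \<mu>2 \<mu>1 \<beta> q v u" using sol solves_S_swap by blast
  have sys: "solves_damped_system (tau0 N p) (sigma0 N p) \<mu>1 \<mu>2 \<beta> q w1 w2"
    unfolding N_def w1_def w2_def using wbar_solves_damped_system[OF sol rad pq q N(2) e] .
  have nonneg: "\<And>t. 0 \<le> w1 t" "\<And>t. 0 \<le> w2 t"
    unfolding w1_def w2_def using wbar_nonneg[OF sol e] wbar_nonneg[OF sol' e] by auto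
  obtain B1 B2 where B: "\<And>t. w1 t \<le> B1" "\<And>t. w2 t \<le> B2"
    using wbar_bounded[OF sol rad(1) pos(1) _ pq q e] wbar_bounded[OF sol' rad(2) pos(2) _ pq q e] pos(3)
    unfolding w1_def w2_def by auto
  have "\<exists>C. \<forall>t. \<bar>Psi_bar N p q \<mu>1 \<mu>2 \<beta> w1 w2 t\<bar> \<le> C"
    using pos B by (intro Psi_bar_bounded[where B = "max B1 B2", OF sys \<tau> _ _ _ q pq nonneg(1) _ nonneg(2)])
      (simp_all add: le_max_iff_disj)
  moreover note Psi_bar_mono[OF sys less_imp_le[OF \<tau>] nonneg q pq]
    and Psi_bar_has_real_derivative[OF sys nonneg q pq]
  ultimately show ?thesis using sys unfolding solves_damped_system_def by blast
qed

end
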